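(* Let $k\ge1$, $j\ge0$ be integers, and let $h$ have a continuous derivative of order $k+j$ on an interval $(a,b)$. Then for all $a<u<v<b$, \[ \int_u^v h^{(k+j)}(t)\,(t-u)^{k-1}(v-t)^{j}\,dt=(v-u)^{k+j}\,{}_jM_{k-1}(u,v). \]
   Context: For a function $h$ set $M(u,v)=\frac{h(v)-h(u)}{v-u}$ for $u\ne v$, and ${}_iM_j(u,v)=\frac{\partial^{i+j}}{\partial u^i\partial v^j}M(u,v)$ (partial derivatives $i$ times in $u$ and $j$ times in $v$). *)

theory Defs
  imports "HOL-Analysis.Analysis"
begin

definition nderiv :: "nat \<Rightarrow> (real \<Rightarrow> real) \<Rightarrow> real \<Rightarrow> real" where
  "nderiv n f = (deriv ^^ n) f"

definition C_n_on :: "nat \<Rightarrow> (real \<Rightarrow> real) \<Rightarrow> real set \<Rightarrow> bool" where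
  "C_n_on n h S \<longleftrightarrow>
     (\<forall>m<n. \<forall>t\<in>S. (nderiv m h has_real_derivative nderiv (Suc m) h t) (at t))
     \<and> continuous_on S (nderiv n h)"

definition Mdd :: "(real \<Rightarrow> real) \<Rightarrow> real \<Rightarrow> real \<Rightarrow> real" where
  "Mdd h u v = (h v - h u) / (v - u)"

text \<open>iMj(u,v): partial derivative i times in u and j times in v.\<close>
definition Mpartial :: "(real \<Rightarrow> real) \<Rightarrow> nat \<Rightarrow> nat \<Rightarrow> real \<Rightarrow> real \<Rightarrow> real" where
  "Mpartial h i j u v = nderiv i (\<lambda>x. nderiv j (\<lambda>y. Mdd h x y) v) u"

end

theory Submission
  imports Defs
begin

(* For a < x < y < b the fundamental theorem of calculus gives the
   integral representation of the divided difference
       M(x,y) = \<integral>_0^1 h'((1-s) x + s y) ds.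
   Differentiating under the integral sign, p times in x and q times in y, gives
       pMq(x,y) = \<integral>_0^1 h^(p+q+1)((1-s) x + s y) (1-s)^p s^q ds,
   since each x-derivative produces a factor (1-s) and each y-derivative a factor s.
   The theorem is the case p = j, q = k-1, x = u, y = v, after the affine change of
   variables t = (1-s) u + s v, which maps [0,1] onto [u,v]. *)

lemma nderiv_Suc: "nderiv (Suc m) f = deriv (nderiv m f)"
  by (simp add: nderiv_def)

lemma nderiv_eq_on_open:
  assumes S: "open S"
    and D: "\<And>m z. m < N \<Longrightarrow> z \<in> S \<Longrightarrow> (D m has_real_derivative D (Suc m) z) (at z)"
    and f: "\<And>z. z \<in> S \<Longrightarrow> f z = D 0 z"
  shows "m \<le> N \<Longrightarrow> z \<in> S \<Longrightarrow> nderiv m f z = D m z"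
proof (induction m arbitrary: z)
  case 0
  then show ?case using f by (simp add: nderiv_def)
next
  case (Suc m)
  have "(nderiv m f has_real_derivative D (Suc m) z) (at z)"
    using has_field_derivative_transform_within_open[OF D[of m z] S \<open>z \<in> S\<close>, of "nderiv m f"]
      Suc by auto
  then show ?case by (simp add: nderiv_Suc DERIV_imp_deriv)
qed

lemma C_n_on_deriv:
  assumes "C_n_on n h S" "m < n" "t \<in> S"
  shows "(nderiv m h has_real_derivative nderiv (Suc m) h t) (at t)"
  using assms unfolding C_n_on_def by blast

lemma C_n_on_continuous:
  assumes "C_n_on n h S" "m \<le> n"
  shows "continuous_on S (nderiv m h)"
proof (cases "m = n")
  case True
  then show ?thesis using assms unfolding C_n_on_def by blast
next
  case False
  then show ?thesis
    using assms by (meson C_n_on_deriv DERIV_isCont continuous_at_imp_continuous_on le_neq_implies_less)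
qed

lemma integral_segment_to_unit:
  fixes f :: "real \<Rightarrow> real"
  assumes "x \<le> y" and f: "continuous_on {x..y} f"
  shows "integral {x..y} f = (y - x) * integral {0..1} (\<lambda>s. f ((1 - s) * x + s * y))"
proof -
  have into: "(\<lambda>s. (1 - s) * x + s * y) ` {0..1} \<subseteq> {x..y}"
    using convexD_alt[OF convex_real_interval(5), of x x y y] \<open>x \<le> y\<close> by auto
  have "((\<lambda>s. (y - x) *\<^sub>R f ((1 - s) * x + s * y)) has_integral
          integral {(1 - 0) * x + 0 * y..(1 - 1) * x + 1 * y} f) {0..1}"
    by (rule has_integral_substitution[OF _ _ into f])
       (use \<open>x \<le> y\<close> in \<open>auto intro!: derivative_eq_intros\<close>)
  then have "((\<lambda>s. (y - x) * f ((1 - s) * x + s * y)) has_integral integral {x..y} f) {0..1}"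
    by simp
  then have "integral {0..1} (\<lambda>s. (y - x) * f ((1 - s) * x + s * y)) = integral {x..y} f"
    by (rule integral_unique)
  then show ?thesis by simp
qed

lemma integral_param_has_derivative:
  fixes g g' c d w :: "real \<Rightarrow> real"
  assumes U: "open U" "convex U" "z0 \<in> U"
    and g: "\<And>t. t \<in> S \<Longrightarrow> (g has_real_derivative g' t) (at t)"
    and g': "continuous_on S g'"
    and cont: "continuous_on {0..1} c" "continuous_on {0..1} d" "continuous_on {0..1} w"
    and maps: "\<And>s z. s \<in> {0..1} \<Longrightarrow> z \<in> U \<Longrightarrow> c s + d s * z \<in> S"
  shows "((\<lambda>z. integral {0..1} (\<lambda>s. g (c s + d s * z) * w s)) has_real_derivative
          integral {0..1} (\<lambda>s. g' (c s + d s * z0) * (d s * w s))) (at z0)"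
proof -
  have g_cont: "continuous_on S g"
    using g by (meson DERIV_isCont continuous_at_imp_continuous_on)
  have "((\<lambda>z. integral (cbox 0 1) (\<lambda>s. g (c s + d s * z) * w s)) has_real_derivative
          integral (cbox 0 1) (\<lambda>s. g' (c s + d s * z0) * (d s * w s))) (at z0 within U)"
  proof (rule leibniz_rule_field_derivative[where f="\<lambda>z s. g (c s + d s * z) * w s"])
    fix z s assume "z \<in> U" "s \<in> cbox (0::real) 1"
    then have "c s + d s * z \<in> S" using maps by auto
    then have "((\<lambda>z. g (c s + d s * z)) has_real_derivative g' (c s + d s * z) * d s) (at z)"
      by (auto intro!: DERIV_chain2[OF g] derivative_eq_intros)
    then have "((\<lambda>z. g (c s + d s * z) * w s) has_real_derivative
                 g' (c s + d s * z) * d s * w s) (at z)"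
      by (rule DERIV_cmult_right)
    then show "((\<lambda>z. g (c s + d s * z) * w s) has_real_derivative
                 g' (c s + d s * z) * (d s * w s)) (at z within U)"
      by (simp add: has_field_derivative_at_within mult.assoc)
  next
    fix z assume "z \<in> U"
    then have "continuous_on {0..1} (\<lambda>s. g (c s + d s * z) * w s)"
      using maps cont
      by (intro continuous_on_mult continuous_on_compose2[OF g_cont] continuous_intros) auto
    then show "(\<lambda>s. g (c s + d s * z) * w s) integrable_on cbox 0 1"
      by (simp add: integrable_continuous_real)
  next
    have snd: "continuous_on (U \<times> {0..1}) (\<lambda>p. f (snd p))" if "continuous_on {0..1} f" for f
      by (rule continuous_on_compose2[OF that]) (auto intro: continuous_intros)
    have "continuous_on (U \<times> {0..1}) (\<lambda>p. g' (c (snd p) + d (snd p) * fst p) * (d (snd p) * w (snd p)))"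
      using maps cont
      by (intro continuous_on_mult continuous_on_compose2[OF g'] continuous_on_add snd
          continuous_on_fst continuous_on_id) force+
    then show "continuous_on (U \<times> cbox 0 1) (\<lambda>(z, s). g' (c s + d s * z) * (d s * w s))"
      by (simp add: case_prod_beta)
  qed (use U in auto)
  then show ?thesis
    by (simp add: at_within_open[OF U(3,1)])
qed

definition Mrep :: "(real \<Rightarrow> real) \<Rightarrow> nat \<Rightarrow> nat \<Rightarrow> real \<Rightarrow> real \<Rightarrow> real" where
  "Mrep h p q x y =
     integral {0..1} (\<lambda>s. nderiv (Suc (p + q)) h ((1 - s) * x + s * y) * ((1 - s) ^ p * s ^ q))"

lemma segment_in_interval:
  fixes x y s :: real
  assumes "x \<in> {a<..<b}" "y \<in> {a<..<b}" "s \<in> {0..1}"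
  shows "(1 - s) * x + s * y \<in> {a<..<b}"
  using convexD_alt[OF convex_real_interval(8)] assms by auto

lemma Mrep_has_derivative_right:
  assumes C: "C_n_on n h {a<..<b}" and pq: "p + q + 2 \<le> n"
    and x: "x \<in> {a<..<b}" and y: "y \<in> {a<..<b}"
  shows "((\<lambda>y. Mrep h p q x y) has_real_derivative Mrep h p (Suc q) x y) (at y)"
proof -
  have "((\<lambda>z. integral {0..1} (\<lambda>s. nderiv (Suc (p + q)) h ((1 - s) * x + s * z) * ((1 - s) ^ p * s ^ q)))
          has_real_derivative
          integral {0..1} (\<lambda>s. nderiv (Suc (Suc (p + q))) h ((1 - s) * x + s * y) * (s * ((1 - s) ^ p * s ^ q))))
        (at y)"
    using C pq x y segment_in_interval[OF x]
    by (intro integral_param_has_derivative[where S="{a<..<b}"] C_n_on_deriv C_n_on_continuous)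
       (auto intro!: continuous_intros)
  then show ?thesis
    by (simp add: Mrep_def mult_ac)
qed

lemma Mrep_has_derivative_left:
  assumes C: "C_n_on n h {a<..<b}" and pq: "p + q + 2 \<le> n"
    and x: "x \<in> {a<..<b}" and y: "y \<in> {a<..<b}"
  shows "((\<lambda>x. Mrep h p q x y) has_real_derivative Mrep h (Suc p) q x y) (at x)"
proof -
  have "((\<lambda>z. integral {0..1} (\<lambda>s. nderiv (Suc (p + q)) h (s * y + (1 - s) * z) * ((1 - s) ^ p * s ^ q)))
          has_real_derivative
          integral {0..1} (\<lambda>s. nderiv (Suc (Suc (p + q))) h (s * y + (1 - s) * x) * ((1 - s) * ((1 - s) ^ p * s ^ q))))
        (at x)"
    using C pq x y segment_in_interval[OF _ y]
    by (intro integral_param_has_derivative[where S="{a<..<b}"] C_n_on_deriv C_n_on_continuous)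
       (auto intro!: continuous_intros simp: add.commute)
  then show ?thesis
    by (simp add: Mrep_def mult_ac add.commute)
qed

lemma Mdd_eq_Mrep:
  assumes C: "C_n_on n h {a<..<b}" and n: "1 \<le> n"
    and "a < x" "x < y" "y < b"
  shows "Mdd h x y = Mrep h 0 0 x y"
proof -
  have sub: "{x..y} \<subseteq> {a<..<b}" using assms by auto
  have "(nderiv 1 h has_integral (h y - h x)) {x..y}"
  proof (rule fundamental_theorem_of_calculus)
    fix t assume "t \<in> {x..y}"
    then have "(h has_real_derivative nderiv 1 h t) (at t)"
      using C_n_on_deriv[OF C, of 0 t] n sub by (auto simp: nderiv_def)
    then show "(h has_vector_derivative nderiv 1 h t) (at t within {x..y})"
      by (simp add: has_field_derivative_at_within has_real_derivative_iff_has_vector_derivative[symmetric])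
  qed (use \<open>x < y\<close> in auto)
  then have "h y - h x = integral {x..y} (nderiv 1 h)"
    by (simp add: integral_unique)
  also have "\<dots> = (y - x) * Mrep h 0 0 x y"
    using integral_segment_to_unit[OF _ continuous_on_subset[OF C_n_on_continuous[OF C n] sub]]
      \<open>x < y\<close> by (simp add: Mrep_def)
  finally show ?thesis
    using \<open>x < y\<close> by (simp add: Mdd_def field_simps)
qed

lemma Mpartial_eq_Mrep:
  assumes C: "C_n_on n h {a<..<b}" and pq: "p + q < n"
    and "a < x" "x < y" "y < b"
  shows "Mpartial h p q x y = Mrep h p q x y"
proof -
  have inner: "nderiv q (\<lambda>y'. Mdd h x' y') y = Mrep h 0 q x' y" if "a < x'" "x' < y" for x'
  proof (rule nderiv_eq_on_open[where S="{x'<..<b}" and N=q and D="\<lambda>m z. Mrep h 0 m x' z"])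
    fix m z assume "m < q" "z \<in> {x'<..<b}"
    then show "((\<lambda>z. Mrep h 0 m x' z) has_real_derivative Mrep h 0 (Suc m) x' z) (at z)"
      using that pq by (intro Mrep_has_derivative_right[OF C]) auto
  next
    fix z assume "z \<in> {x'<..<b}"
    then show "Mdd h x' z = Mrep h 0 0 x' z"
      using that pq by (intro Mdd_eq_Mrep[OF C]) auto
  qed (use that assms in auto)
  show ?thesis
    unfolding Mpartial_def
  proof (rule nderiv_eq_on_open[where S="{a<..<y}" and N=p and D="\<lambda>m x'. Mrep h m q x' y"])
    fix m z assume "m < p" "z \<in> {a<..<y}"
    then show "((\<lambda>x'. Mrep h m q x' y) has_real_derivative Mrep h (Suc m) q z y) (at z)"
      using assms by (intro Mrep_has_derivative_left[OF C]) auto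
  qed (use inner assms in auto)
qed

theorem mainTheorem7:
  fixes h :: "real \<Rightarrow> real" and a b u v :: real and k j :: nat
  assumes "k \<ge> 1"
    and "C_n_on (k + j) h {a<..<b}"
    and "a < u" and "u < v" and "v < b"
  shows "integral {u..v} (\<lambda>t. nderiv (k + j) h t * (t - u) ^ (k - 1) * (v - t) ^ j)
           = (v - u) ^ (k + j) * Mpartial h j (k - 1) u v"
proof -
  obtain i where k: "k = Suc i" using \<open>k \<ge> 1\<close> by (cases k) auto
  define F where "F t = nderiv (k + j) h t * (t - u) ^ i * (v - t) ^ j" for t
  have F_cont: "continuous_on {u..v} F"
    unfolding F_def using assms
    by (intro continuous_intros continuous_on_subset[OF C_n_on_continuous[OF assms(2) order.refl]]) auto
  text \<open>After the substitution t = (1-s) u + s v, the powers of t - u and v - t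
    contribute (v - u)^(k+j-1) and the weight s^(k-1) (1-s)^j of Mrep.\<close>
  have F_segment: "(v - u) * F ((1 - s) * u + s * v) =
      (v - u) ^ (k + j) * (nderiv (Suc (j + i)) h ((1 - s) * u + s * v) * ((1 - s) ^ j * s ^ i))"
    for s
  proof -
    have "(1 - s) * u + s * v - u = s * (v - u)" "v - ((1 - s) * u + s * v) = (1 - s) * (v - u)"
      by (simp_all add: algebra_simps)
    then show ?thesis
      unfolding F_def k by (simp add: power_mult_distrib power_add mult_ac add.commute)
  qed
  have "integral {u..v} F = integral {0..1} (\<lambda>s. (v - u) * F ((1 - s) * u + s * v))"
    using integral_segment_to_unit[OF _ F_cont] \<open>u < v\<close> by simp
  also have "\<dots> = (v - u) ^ (k + j) * Mrep h j i u v"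
    by (simp add: F_segment Mrep_def)
  also have "Mrep h j i u v = Mpartial h j i u v"
    using assms k by (intro Mpartial_eq_Mrep[symmetric]) auto
  finally show ?thesis
    by (simp add: F_def k)
qed

end
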